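(* Let $c\in\mathbb{C}(t)\setminus\{0,1,t\}$ and $F_n$, $P_1$, $d$ as in the context. For every $\epsilon>0$ there exist $\delta>0$ and an integer $N>0$ such that $$\frac{1}{\deg F_n}\log\|F_n(1,t)\|-\frac{\log|P_1(1,0)|}{d}<\epsilon$$ for all $t\in\mathbb{C}$ with $|t|<\delta$ and all $n\ge N$.
   Context: $F_{t_1,t_2}(z,w)=\big((t_1w^2-t_2z^2)^2,\;4t_2zw(w-z)(t_1w-t_2z)\big)$. $C=(c_1,c_2)$ is a pair of coprime homogeneous polynomials in $(t_1,t_2)$ of equal degree with $c(t)=c_1(t,1)/c_2(t,1)$. $F_1=F_{t_1,t_2}(C)/\gcd(F_{t_1,t_2}(C))=(P_1,Q_1)$, $d=\deg F_1$, $F_{n+1}=F_{t_1,t_2}(F_n)/t_2^2$, so $\deg F_n=4^{n-1}d$. $\|(z,w)\|=\max\{|z|,|w|\}$. *)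

theory Defs
  imports "HOL-Analysis.Analysis" "HOL-Computational_Algebra.Computational_Algebra" "HOL-Computational_Algebra.Field_as_Ring"
begin

text \<open>Bivariate polynomials in (t1,t2) are represented as elements of
  the ring C[t1][t2], i.e. the type complex poly poly: the outer variable
  is t2, the coefficients are polynomials in t1.\<close>

type_synonym bpoly = "complex poly poly"

definition T1 :: bpoly where "T1 = [:[:0, 1:]:]"
definition T2 :: bpoly where "T2 = [:0, 1:]"

definition eval2 :: "bpoly \<Rightarrow> complex \<Rightarrow> complex \<Rightarrow> complex" where
  "eval2 P x y = poly (poly P [:y:]) x"

text \<open>coeff (coeff P i) j is the coefficient of t2^i t1^j.\<close>
definition homogeneous :: "nat \<Rightarrow> bpoly \<Rightarrow> bool" where
  "homogeneous D P \<longleftrightarrow> (\<forall>i j. coeff (coeff P i) j \<noteq> 0 \<longrightarrow> i + j = D)"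

definition tdeg :: "bpoly \<Rightarrow> nat" where
  "tdeg P = Max {i + j | i j. coeff (coeff P i) j \<noteq> 0}"

definition hdeg :: "bpoly \<times> bpoly \<Rightarrow> nat" where
  "hdeg F = max (tdeg (fst F)) (tdeg (snd F))"

definition Fmap :: "bpoly \<times> bpoly \<Rightarrow> bpoly \<times> bpoly" where
  "Fmap zw = (case zw of (z, w) \<Rightarrow>
     ((T1 * w^2 - T2 * z^2)^2, 4 * T2 * z * w * (w - z) * (T1 * w - T2 * z)))"

definition F1 :: "bpoly \<Rightarrow> bpoly \<Rightarrow> bpoly \<times> bpoly" where
  "F1 c1 c2 = (case Fmap (c1, c2) of (A, B) \<Rightarrow> (A div gcd A B, B div gcd A B))"

text \<open>Fseq c1 c2 k = F_{k+1}.\<close>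
primrec Fseq :: "bpoly \<Rightarrow> bpoly \<Rightarrow> nat \<Rightarrow> bpoly \<times> bpoly" where
  "Fseq c1 c2 0 = F1 c1 c2"
| "Fseq c1 c2 (Suc k) = (case Fmap (Fseq c1 c2 k) of (A, B) \<Rightarrow> (A div T2^2, B div T2^2))"

text \<open>F_n for n \<ge> 1.\<close>
definition Fn :: "bpoly \<Rightarrow> bpoly \<Rightarrow> nat \<Rightarrow> bpoly \<times> bpoly" where
  "Fn c1 c2 n = Fseq c1 c2 (n - 1)"

text \<open>The rational function c(t) = c1(t,1)/c2(t,1) in C(t).\<close>
definition ratfun :: "bpoly \<Rightarrow> bpoly \<Rightarrow> complex poly fract" where
  "ratfun c1 c2 = Fract (poly c1 [:1:]) (poly c2 [:1:])"

definition pnorm :: "complex \<times> complex \<Rightarrow> real" where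
  "pnorm zw = max (cmod (fst zw)) (cmod (snd zw))"

end

theory Submission
  imports Defs
begin

text \<open>The second component of \<open>F_1\<close> is divisible by \<open>t_2\<close>. Writing
  \<open>F_n = (P, t_2 R)\<close>, the recursion becomes the polynomial map
  \<open>G(P,R) = ((t_1 t_2 R^2 - P^2)^2, 4PR(t_2 R - P)(t_1 R - P))\<close>, and
  \<open>\<parallel>F_n(1,t)\<parallel> \<le> \<parallel>G^(n-1)(x_0)\<parallel>\<close> at \<open>(1,t)\<close> for \<open>|t| \<le> 1\<close>. There
  \<open>3\<parallel>G(x)\<parallel> \<le> (3\<parallel>x\<parallel>)^4\<close>, so \<open>4^-k log (3\<parallel>G^k(x)\<parallel>)\<close> does not increase
  along orbits. At \<open>t = 0\<close> the first coordinate of \<open>G^k(x_0)\<close> is exactly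
  \<open>a^(4^k)\<close> with \<open>a = P_1(1,0)\<close>, while the ratio of the coordinates grows only
  like \<open>C^(2^k)\<close>; hence \<open>4^-N log (3\<parallel>G^N(x_0)\<parallel>)\<close> drops below
  \<open>log |a| + \<epsilon> d\<close> for some \<open>N\<close>. By continuity this persists for small \<open>t\<close>, and
  by monotonicity for all later iterates.\<close>

lemma T2_dvd_iff: "T2 dvd (X :: bpoly) \<longleftrightarrow> poly X 0 = 0"
  by (simp add: T2_def poly_eq_0_iff_dvd)

lemma prime_elem_T2: "prime_elem T2"
proof (rule prime_elemI)
  show "T2 \<noteq> 0" by (simp add: T2_def)
  show "\<not> is_unit T2" by (simp add: T2_dvd_iff)
  fix a b :: bpoly assume "T2 dvd a * b"
  then show "T2 dvd a \<or> T2 dvd b" by (simp add: T2_dvd_iff)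
qed

lemma poly_T1_0 [simp]: "poly T1 0 = [:0, 1:]" by (simp add: T1_def)
lemma poly_T2_0 [simp]: "poly T2 0 = 0" by (simp add: T2_def)

lemma T2_dvd_snd_F1:
  assumes "coprime c1 c2"
  shows "T2 dvd snd (F1 c1 c2)"
proof -
  define A where "A = (T1 * c2^2 - T2 * c1^2)^2"
  define B where "B = 4 * T2 * c1 * c2 * (c2 - c1) * (T1 * c2 - T2 * c1)"
  define g where "g = gcd A B"
  have F: "snd (F1 c1 c2) = B div g" by (simp add: F1_def Fmap_def A_def B_def g_def)
  have Bg: "B = g * (B div g)" by (simp add: g_def)
  show ?thesis
  proof (cases "T2 dvd c2")
    case False
    then have "\<not> T2 dvd A" by (simp add: A_def T2_dvd_iff)
    then have "\<not> T2 dvd g" by (metis g_def gcd_dvd1 dvd_trans)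
    moreover have "T2 dvd g * (B div g)" by (metis Bg B_def dvd_mult mult.commute dvd_triv_left)
    ultimately show ?thesis
      unfolding F using prime_elem_T2 by (metis prime_elem_dvd_mult_iff)
  next
    case True
    then obtain w where w: "c2 = T2 * w" by (auto elim: dvdE)
    have "\<not> T2 dvd c1"
      using assms True prime_elem_T2 coprime_common_divisor prime_elem_def by blast
    define E where "E = T1 * T2 * w^2 - c1^2"
    \<comment> \<open>\<open>t\<^sub>2\<close> divides \<open>B\<close> three times but \<open>A\<close> only twice, so it survives in \<open>B div g\<close>.\<close>
    have AE: "A = T2^2 * E^2" by (simp add: A_def E_def w power2_eq_square algebra_simps)
    have BE: "B = T2^3 * (4 * c1 * w * (T2 * w - c1) * (T1 * w - c1))"
      by (simp add: B_def w power3_eq_cube algebra_simps)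
    have "\<not> T2 dvd E" using \<open>\<not> T2 dvd c1\<close> by (simp add: E_def T2_dvd_iff)
    show ?thesis unfolding F
    proof (rule ccontr)
      assume "\<not> T2 dvd B div g"
      then have "coprime (B div g) (T2^3)" by (rule prime_elem_imp_power_coprime[OF prime_elem_T2])
      moreover have "T2^3 dvd g * (B div g)" using BE Bg by (metis dvd_triv_left)
      ultimately have "T2^2 * T2 dvd T2^2 * E^2"
        using AE by (metis g_def gcd_dvd1 dvd_trans coprime_commute coprime_dvd_mult_left_iff
            power_Suc2 numeral_3_eq_3 Suc_numeral semiring_norm(5))
      moreover have "T2^2 \<noteq> 0" by (simp add: T2_def)
      ultimately have "T2 dvd E^2" using dvd_times_left_cancel_iff by blast
      then show False using \<open>\<not> T2 dvd E\<close> by (simp add: T2_dvd_iff)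
    qed
  qed
qed

definition redmap :: "bpoly \<times> bpoly \<Rightarrow> bpoly \<times> bpoly" where
  "redmap x = ((T1 * T2 * (snd x)^2 - (fst x)^2)^2,
     4 * fst x * snd x * (T2 * snd x - fst x) * (T1 * snd x - fst x))"

lemma Fmap_T2_mult: "Fmap (P, T2 * R) = (T2^2 * fst (redmap (P, R)), T2^2 * (T2 * snd (redmap (P, R))))"
  by (simp add: Fmap_def redmap_def power2_eq_square algebra_simps)

lemma Fseq_eq_redmap_iter:
  assumes "F1 c1 c2 = (P, T2 * R)"
  shows "Fseq c1 c2 k = (fst ((redmap ^^ k) (P, R)), T2 * snd ((redmap ^^ k) (P, R)))"
proof (induction k)
  case 0 then show ?case using assms by simp
next
  case (Suc k)
  have "T2^2 \<noteq> 0" by (simp add: T2_def)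
  with Suc show ?case by (simp add: Fmap_T2_mult)
qed

lemma eval2_add [simp]: "eval2 (a + b) x y = eval2 a x y + eval2 b x y" by (simp add: eval2_def)
lemma eval2_diff [simp]: "eval2 (a - b) x y = eval2 a x y - eval2 b x y" by (simp add: eval2_def)
lemma eval2_mult [simp]: "eval2 (a * b) x y = eval2 a x y * eval2 b x y" by (simp add: eval2_def)
lemma eval2_power [simp]: "eval2 (a ^ n) x y = eval2 a x y ^ n" by (induction n) (simp_all add: eval2_def)
lemma eval2_numeral [simp]: "eval2 (numeral n) x y = numeral n" by (simp add: eval2_def)
lemma eval2_T1 [simp]: "eval2 T1 x y = x" by (simp add: eval2_def T1_def)
lemma eval2_T2 [simp]: "eval2 T2 x y = y" by (simp add: eval2_def T2_def)

lemma isCont_eval2: "isCont (\<lambda>t. eval2 P x t) t0"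
proof (induction P)
  case 0 then show ?case by (simp add: eval2_def)
next
  case (pCons a P)
  have "eval2 (pCons a P) x t = poly a x + t * eval2 P x t" for t by (simp add: eval2_def)
  with pCons show ?case by simp
qed

definition eval_pair :: "complex \<Rightarrow> bpoly \<times> bpoly \<Rightarrow> complex \<times> complex" where
  "eval_pair t x = (eval2 (fst x) 1 t, eval2 (snd x) 1 t)"

definition redmap_at :: "complex \<Rightarrow> complex \<times> complex \<Rightarrow> complex \<times> complex" where
  "redmap_at t x = ((t * (snd x)^2 - (fst x)^2)^2,
     4 * fst x * snd x * (t * snd x - fst x) * (snd x - fst x))"

lemma eval_pair_redmap: "eval_pair t (redmap x) = redmap_at t (eval_pair t x)"
  by (simp add: eval_pair_def redmap_def redmap_at_def)

lemma eval_pair_redmap_iter: "eval_pair t ((redmap ^^ k) x) = (redmap_at t ^^ k) (eval_pair t x)"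
  by (induction k) (simp_all add: eval_pair_redmap)

lemma pnorm_eval_Fn_le:
  assumes "F1 c1 c2 = (P, T2 * R)" and "cmod t \<le> 1"
  shows "pnorm (eval2 (fst (Fn c1 c2 n)) 1 t, eval2 (snd (Fn c1 c2 n)) 1 t)
           \<le> pnorm ((redmap_at t ^^ (n - 1)) (eval_pair t (P, R)))"
proof -
  define x where "x = (redmap_at t ^^ (n - 1)) (eval_pair t (P, R))"
  have "(eval2 (fst (Fn c1 c2 n)) 1 t, eval2 (snd (Fn c1 c2 n)) 1 t) = (fst x, t * snd x)"
    unfolding Fn_def Fseq_eq_redmap_iter[OF assms(1)] x_def eval_pair_redmap_iter[symmetric]
    by (simp add: eval_pair_def)
  moreover have "cmod t * cmod (snd x) \<le> cmod (snd x)"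
    using assms(2) by (simp add: mult_left_le_one_le)
  ultimately show ?thesis by (auto simp: pnorm_def norm_mult x_def)
qed

lemma pnorm_nonneg: "0 \<le> pnorm x"
  by (simp add: pnorm_def le_max_iff_disj)

lemma pnorm_redmap_at_le:
  assumes "cmod t \<le> 1"
  shows "3 * pnorm (redmap_at t x) \<le> (3 * pnorm x)^4"
proof -
  obtain p r where x: "x = (p, r)" by (cases x)
  define m where "m = pnorm x"
  have pm: "cmod p \<le> m" and rm: "cmod r \<le> m" by (auto simp: m_def pnorm_def x)
  have m0: "0 \<le> m" using pm norm_ge_zero order_trans by blast
  have "cmod (t * r^2 - p^2) \<le> cmod t * cmod r ^ 2 + cmod p ^ 2"
    by (metis norm_mult norm_power norm_triangle_ineq4)
  also have "\<dots> \<le> 1 * m^2 + m^2"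
    by (intro add_mono mult_mono power_mono assms pm rm) auto
  finally have "cmod (t * r^2 - p^2) \<le> 2 * m^2" by simp
  then have fst_le: "cmod ((t * r^2 - p^2)^2) \<le> 4 * m^4"
    using power_mono[of _ "2 * m^2" 2] by (simp add: norm_power power_mult_distrib flip: power_mult)
  have "cmod (t * r - p) \<le> cmod t * cmod r + cmod p" by (metis norm_mult norm_triangle_ineq4)
  also have "\<dots> \<le> 1 * m + m" by (intro add_mono mult_mono assms pm rm) auto
  finally have c1: "cmod (t * r - p) \<le> 2 * m" by simp
  have c2: "cmod (r - p) \<le> 2 * m" using norm_triangle_ineq4[of r p] pm rm by simp
  have "cmod (4 * p * r * (t * r - p) * (r - p))
      = 4 * cmod p * cmod r * cmod (t * r - p) * cmod (r - p)" by (simp add: norm_mult)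
  also have "\<dots> \<le> 4 * m * m * (2 * m) * (2 * m)"
    by (intro mult_mono pm rm c1 c2) (auto simp: m0)
  finally have snd_le: "cmod (4 * p * r * (t * r - p) * (r - p)) \<le> 16 * m^4"
    by (simp add: power4_eq_xxxx)
  have m4: "0 \<le> m^4" using m0 by simp
  have "pnorm (redmap_at t x) \<le> 16 * m^4"
    unfolding pnorm_def redmap_at_def x fst_conv snd_conv
    by (intro max.boundedI) (use fst_le snd_le m4 in linarith)+
  then have "3 * pnorm (redmap_at t x) \<le> 81 * m^4" using m4 by linarith
  also have "\<dots> = (3 * m)^4" by (simp add: power_mult_distrib)
  finally show ?thesis by (simp add: m_def)
qed

lemma pnorm_redmap_at_iter_le:
  assumes "cmod t \<le> 1"
  shows "3 * pnorm ((redmap_at t ^^ k) x) \<le> (3 * pnorm x)^(4^k)"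
proof (induction k)
  case 0 then show ?case by simp
next
  case (Suc k)
  have "3 * pnorm ((redmap_at t ^^ Suc k) x) \<le> (3 * pnorm ((redmap_at t ^^ k) x))^4"
    using pnorm_redmap_at_le[OF assms] by simp
  also have "\<dots> \<le> ((3 * pnorm x)^(4^k))^4"
    by (intro power_mono Suc) (simp add: pnorm_nonneg)
  also have "\<dots> = (3 * pnorm x)^(4^Suc k)" by (metis power_Suc power_mult mult.commute)
  finally show ?case .
qed

lemma redmap_at_zero_iter_bound:
  assumes "a \<noteq> 0" "8 \<le> C" "8 * pnorm (a, r) \<le> cmod a * C"
  shows "fst ((redmap_at 0 ^^ k) (a, r)) = a^(4^k) \<and>
         8 * pnorm ((redmap_at 0 ^^ k) (a, r)) \<le> cmod a ^ (4^k) * C^(2^k)"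
proof (induction k)
  case 0 then show ?case using assms by simp
next
  case (Suc k)
  obtain p q where pq: "(redmap_at 0 ^^ k) (a, r) = (p, q)" by fastforce
  define \<alpha> where "\<alpha> = cmod a ^ (4^k)"
  define \<rho> where "\<rho> = C^(2^k)"
  define m where "m = pnorm (p, q)"
  have p: "p = a^(4^k)" and mb: "8 * m \<le> \<alpha> * \<rho>" using Suc pq by (auto simp: \<alpha>_def \<rho>_def m_def)
  have cp: "cmod p = \<alpha>" by (simp add: p \<alpha>_def norm_power)
  have pm: "cmod p \<le> m" and qm: "cmod q \<le> m" by (auto simp: m_def pnorm_def)
  have m0: "0 \<le> m" using pm norm_ge_zero order_trans by blast
  have \<alpha>0: "0 \<le> \<alpha>" by (simp add: \<alpha>_def)
  have "C^1 \<le> C^(2^k)" using assms(2) by (intro power_increasing) auto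
  then have "8 \<le> \<rho>" using assms(2) by (simp add: \<rho>_def)
  have new: "(redmap_at 0 ^^ Suc k) (a, r) = (p^4, 4 * p * q * (- p) * (q - p))"
    using pq by (simp add: redmap_at_def power4_eq_xxxx power2_eq_square)
  have "\<rho>^1 \<le> \<rho>^2" using \<open>8 \<le> \<rho>\<close> by (intro power_increasing) auto
  then have "8 * \<alpha>^4 \<le> \<rho>^2 * \<alpha>^4" using \<open>8 \<le> \<rho>\<close> by (intro mult_right_mono) (auto simp: \<alpha>0)
  then have fst_le: "8 * cmod (p^4) \<le> \<alpha>^4 * \<rho>^2" by (simp add: cp norm_power mult.commute)
  have c2: "cmod (q - p) \<le> 2 * m" using norm_triangle_ineq4[of q p] pm qm by simp
  have "8 * cmod (4 * p * q * (- p) * (q - p)) = 32 * \<alpha>^2 * cmod q * cmod (q - p)"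
    by (simp add: norm_mult cp power2_eq_square)
  also have "\<dots> \<le> 32 * \<alpha>^2 * m * (2 * m)"
    by (intro mult_mono qm c2 m0) (use m0 \<alpha>0 in auto)
  also have "\<dots> = \<alpha>^2 * (8 * m)^2" by (simp add: power2_eq_square)
  also have "\<dots> \<le> \<alpha>^2 * (\<alpha> * \<rho>)^2"
    by (intro mult_left_mono power_mono mb) (auto simp: m0)
  also have "\<dots> = \<alpha>^4 * \<rho>^2" by (simp add: power2_eq_square power4_eq_xxxx mult_ac)
  finally have snd_le: "8 * cmod (4 * p * q * (- p) * (q - p)) \<le> \<alpha>^4 * \<rho>^2" .
  have "8 * pnorm ((redmap_at 0 ^^ Suc k) (a, r)) \<le> \<alpha>^4 * \<rho>^2"
    unfolding new pnorm_def fst_conv snd_conv using fst_le snd_le by (auto simp: max_def)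
  also have "\<alpha>^4 * \<rho>^2 = cmod a ^ (4^Suc k) * C^(2^Suc k)"
    by (simp add: \<alpha>_def \<rho>_def power_mult[symmetric] mult.commute)
  finally show ?case using new p by (simp add: power_mult[symmetric] mult.commute)
qed

lemma redmap_at_zero_escape:
  assumes "cmod a < B"
  shows "\<exists>N. 3 * pnorm ((redmap_at 0 ^^ N) (a, r)) < B^(4^N)"
proof (cases "a = 0")
  case True
  then have "(redmap_at 0 ^^ 1) (a, r) = (0, 0)" by (simp add: redmap_at_def)
  moreover have "0 < B" using assms norm_ge_zero[of a] by linarith
  ultimately show ?thesis by (intro exI[of _ 1]) (simp add: pnorm_def)
next
  case False
  then have a0: "0 < cmod a" by simp
  define C where "C = max 8 (8 * pnorm (a, r) / cmod a)"
  have "8 * pnorm (a, r) / cmod a \<le> C" by (simp add: C_def)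
  then have "8 * pnorm (a, r) \<le> cmod a * C" using a0 by (simp add: pos_divide_le_eq mult.commute)
  from redmap_at_zero_iter_bound[OF False _ this]
  have iter_le: "8 * pnorm ((redmap_at 0 ^^ k) (a, r)) \<le> cmod a ^ (4^k) * C^(2^k)" for k
    by (simp add: C_def)
  define E where "E = B / cmod a"
  have E1: "1 < E" using assms a0 by (simp add: E_def)
  obtain N where "C < E^N" using real_arch_pow[OF E1] by blast
  also have "E^N \<le> E^(2^N)" using E1 by (intro power_increasing) auto
  finally have "C^(2^N) < (E^(2^N))^(2^N)" by (rule power_strict_mono) (auto simp: C_def)
  also have "\<dots> = E^(4^N)" by (simp flip: power_mult power_mult_distrib)
  finally have "cmod a ^ (4^N) * C^(2^N) < cmod a ^ (4^N) * E^(4^N)" using a0 by simp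
  also have "\<dots> = B^(4^N)" using a0 by (simp add: E_def flip: power_mult_distrib)
  finally show ?thesis using iter_le[of N] pnorm_nonneg[of "(redmap_at 0 ^^ N) (a, r)"]
    by (intro exI[of _ N]) linarith
qed

lemma isCont_redmap_at_iter:
  assumes "isCont x0 t0"
  shows "isCont (\<lambda>t. (redmap_at t ^^ k) (x0 t)) t0"
proof (induction k)
  case 0 then show ?case using assms by simp
next
  case (Suc k)
  then show ?case unfolding funpow.simps comp_def redmap_at_def by (intro continuous_intros)
qed

lemma redmap_at_iter_uniform_bound:
  assumes "isCont x0 0" and "cmod (fst (x0 0)) < B"
  shows "\<exists>\<delta>>0. \<delta> \<le> 1 \<and>
           (\<exists>N. \<forall>t k. cmod t < \<delta> \<and> N \<le> k \<longrightarrow> pnorm ((redmap_at t ^^ k) (x0 t)) < B^(4^k))"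
proof -
  define X where "X k t = (redmap_at t ^^ k) (x0 t)" for k t
  obtain N where "3 * pnorm (X N 0) < B^(4^N)"
    using redmap_at_zero_escape[OF assms(2), of "snd (x0 0)"] by (auto simp: X_def)
  moreover have "isCont (\<lambda>t. 3 * pnorm (X N t)) 0"
    unfolding X_def pnorm_def by (intro continuous_intros isCont_redmap_at_iter assms(1))
  then have "((\<lambda>t. 3 * pnorm (X N t)) \<longlongrightarrow> 3 * pnorm (X N 0)) (nhds 0)"
    by (metis isCont_def tendsto_at_iff_tendsto_nhds)
  ultimately have "\<forall>\<^sub>F t in nhds 0. 3 * pnorm (X N t) < B^(4^N)"
    by (intro order_tendstoD(2))
  then obtain \<delta> where "\<delta> > 0" and near: "\<And>t. cmod t < \<delta> \<Longrightarrow> 3 * pnorm (X N t) < B^(4^N)"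
    unfolding eventually_nhds_metric by (auto simp: dist_norm)
  have "pnorm (X k t) < B^(4^k)" if "cmod t < min \<delta> 1" "N \<le> k" for t k
  proof -
    have "X k t = (redmap_at t ^^ (k - N)) (X N t)"
      using that(2) funpow_add[of "k - N" N "redmap_at t"] by (simp add: X_def)
    then have "3 * pnorm (X k t) \<le> (3 * pnorm (X N t))^(4^(k - N))"
      using that(1) pnorm_redmap_at_iter_le by simp
    also have "\<dots> < (B^(4^N))^(4^(k - N))"
      using that(1) near by (intro power_strict_mono) (auto simp: pnorm_nonneg)
    also have "\<dots> = B^(4^k)" using that(2) by (simp flip: power_mult power_add)
    finally show ?thesis using pnorm_nonneg[of "X k t"] by linarith
  qed
  then show ?thesis using \<open>\<delta> > 0\<close> unfolding X_def
    by (intro exI[of _ "min \<delta> 1"]) auto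
qed

lemma ln_div_sub_less_of_less_exp_power:
  fixes q c \<epsilon> :: real and m D :: nat
  assumes "0 < q" "q < exp (c + \<epsilon> * D) ^ m" "0 < m" "0 < D"
  shows "ln q / real (m * D) - c / real D < \<epsilon>"
proof -
  have "ln q < ln (exp (c + \<epsilon> * D) ^ m)" using assms(1,2) by simp
  also have "\<dots> = real m * (c + \<epsilon> * D)" by (simp add: ln_realpow)
  finally have "ln q / (real m * real D) < real m * (c + \<epsilon> * D) / (real m * real D)"
    by (rule divide_strict_right_mono) (use assms(3,4) in simp)
  also have "\<dots> = (c + \<epsilon> * D) / real D"
    by (rule mult_divide_mult_cancel_left) (use assms(3) in simp)
  also have "\<dots> = c / real D + \<epsilon>" using assms(4) by (simp add: add_divide_distrib)
  finally show ?thesis unfolding of_nat_mult by linarith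
qed

theorem lemma4p3:
  fixes c1 c2 :: bpoly and e :: nat and \<epsilon> :: real
  assumes "homogeneous e c1" and "homogeneous e c2"
    and "coprime c1 c2"
    and "ratfun c1 c2 \<notin> {0, 1, Fract [:0, 1:] 1}"
    and "\<epsilon> > 0"
  shows "\<exists>\<delta>>0. \<exists>N>0. \<forall>t n. cmod t < \<delta> \<and> n \<ge> N \<longrightarrow>
     pnorm (eval2 (fst (Fn c1 c2 n)) 1 t, eval2 (snd (Fn c1 c2 n)) 1 t) = 0 \<or>
     ln (pnorm (eval2 (fst (Fn c1 c2 n)) 1 t, eval2 (snd (Fn c1 c2 n)) 1 t))
         / real (4 ^ (n - 1) * hdeg (F1 c1 c2))
       - ln (cmod (eval2 (fst (F1 c1 c2)) 1 0)) / real (hdeg (F1 c1 c2)) < \<epsilon>"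
proof -
  obtain P R where F1: "F1 c1 c2 = (P, T2 * R)"
    using T2_dvd_snd_F1[OF assms(3)] by (metis dvdE prod.collapse)
  let ?a = "eval2 (fst (F1 c1 c2)) 1 0" and ?d = "hdeg (F1 c1 c2)"
  let ?B = "exp (ln (cmod ?a) + \<epsilon> * ?d)"
  show ?thesis
  proof (cases "?d = 0")
    case True
    \<comment> \<open>Both quotients are divisions by zero, hence \<open>0\<close>.\<close>
    then show ?thesis using assms(5) by (simp add: gt_ex)
  next
    case False
    have "cmod (fst (eval_pair 0 (P, R))) < ?B"
      using False assms(5) by (cases "?a = 0") (simp_all add: exp_add F1 eval_pair_def)
    moreover have "isCont (\<lambda>t. eval_pair t (P, R)) 0"
      unfolding eval_pair_def by (intro continuous_intros isCont_eval2)
    ultimately obtain \<delta> N where "\<delta> > 0" "\<delta> \<le> 1" and bound: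
      "\<And>t k. cmod t < \<delta> \<Longrightarrow> N \<le> k \<Longrightarrow> pnorm ((redmap_at t ^^ k) (eval_pair t (P, R))) < ?B^(4^k)"
      using redmap_at_iter_uniform_bound by blast
    show ?thesis
    proof (intro exI[of _ \<delta>] exI[of _ "N + 1"] conjI allI impI)
      fix t n assume tn: "cmod t < \<delta> \<and> N + 1 \<le> n"
      have "pnorm (eval2 (fst (Fn c1 c2 n)) 1 t, eval2 (snd (Fn c1 c2 n)) 1 t)
          \<le> pnorm ((redmap_at t ^^ (n - 1)) (eval_pair t (P, R)))" (is "?q \<le> _")
        using tn \<open>\<delta> \<le> 1\<close> by (intro pnorm_eval_Fn_le[OF F1]) simp
      also have "\<dots> < ?B^(4^(n - 1))" using tn by (intro bound) auto
      finally have q_less: "?q < ?B^(4^(n - 1))" .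
      show "?q = 0 \<or> ln ?q / real (4 ^ (n - 1) * ?d) - ln (cmod ?a) / real ?d < \<epsilon>"
      proof (cases "?q = 0")
        case False
        with pnorm_nonneg have "0 < ?q" by (simp add: order_less_le)
        then show ?thesis
          using q_less \<open>?d \<noteq> 0\<close> by (intro disjI2 ln_div_sub_less_of_less_exp_power) simp_all
      qed simp
    qed (use \<open>\<delta> > 0\<close> in simp_all)
  qed
qed

end
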